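(* Let $\ell\ge 4$, $s\ge 0$, $r\ge 2$ be integers. There is a constant $c=c(\ell,s,r)$ such that for every $n$ and every $n$-vertex $B(\ell,s)$-free graph $G$, the number of $r$-element subsets of $V(G)$ having more than $\ell+s$ common neighbors in $G$ is at most $cn$.
   Context: The broom $B(\ell,s)$ is the graph obtained from a path on $\ell$ vertices by adding $s$ new vertices, each joined only to a penultimate vertex of the path (a neighbor of an endpoint). A common neighbor of a vertex set $X$ is a vertex adjacent to every vertex of $X$. *)

theory Defs
  imports Complex_Main
begin

definition simple_graph :: "'a set \<Rightarrow> ('a \<Rightarrow> 'a \<Rightarrow> bool) \<Rightarrow> bool" where
  "simple_graph V E \<longleftrightarrow> finite V \<and> (\<forall>x y. E x y \<longrightarrow> x \<in> V \<and> y \<in> V)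
     \<and> (\<forall>x y. E x y \<longrightarrow> E y x) \<and> (\<forall>x. \<not> E x x)"

text \<open>The broom B(l,s) on vertex set {0..<l+s}: path 0 - 1 - ... - (l-1), and
  leaves l, ..., l+s-1 each joined to the penultimate path vertex l-2.\<close>
definition broom_edge :: "nat \<Rightarrow> nat \<Rightarrow> nat \<Rightarrow> nat \<Rightarrow> bool" where
  "broom_edge l s i j \<longleftrightarrow>
     (i + 1 = j \<and> j < l) \<or> (j + 1 = i \<and> i < l) \<or>
     (i = l - 2 \<and> l \<le> j \<and> j < l + s) \<or> (j = l - 2 \<and> l \<le> i \<and> i < l + s)"

definition contains_broom :: "'a set \<Rightarrow> ('a \<Rightarrow> 'a \<Rightarrow> bool) \<Rightarrow> nat \<Rightarrow> nat \<Rightarrow> bool" where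
  "contains_broom V E l s \<longleftrightarrow>
     (\<exists>f. inj_on f {0..<l+s} \<and> f ` {0..<l+s} \<subseteq> V \<and>
          (\<forall>i<l+s. \<forall>j<l+s. broom_edge l s i j \<longrightarrow> E (f i) (f j)))"

definition broom_free :: "'a set \<Rightarrow> ('a \<Rightarrow> 'a \<Rightarrow> bool) \<Rightarrow> nat \<Rightarrow> nat \<Rightarrow> bool" where
  "broom_free V E l s \<longleftrightarrow> \<not> contains_broom V E l s"

definition common_nbrs :: "'a set \<Rightarrow> ('a \<Rightarrow> 'a \<Rightarrow> bool) \<Rightarrow> 'a set \<Rightarrow> 'a set" where
  "common_nbrs V E X = {v \<in> V. \<forall>x\<in>X. E x v}"

end

theory Submission
  imports Defs
begin

text \<open>A graph with no broom B(l,s) has a vertex of degree less than l + s: otherwise, starting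
  from any vertex v, greedily grow a path of l - 1 vertices ending at v; v still has s + 1
  neighbours off the path, which complete the broom with v as its penultimate vertex. Broom-freeness
  passes to subgraphs, so G is (l + s)-degenerate. Deleting a vertex v of degree at most l + s
  destroys only those r-sets with many common neighbours that lie inside the neighbourhood of v
  (an r-set containing v has at most deg v common neighbours), i.e. at most 2^(l+s) of them, and
  induction on the number of vertices gives the bound 2^(l+s) n.\<close>

definition nbrs :: "'a set \<Rightarrow> ('a \<Rightarrow> 'a \<Rightarrow> bool) \<Rightarrow> 'a \<Rightarrow> 'a set" where
  "nbrs V E v = {u \<in> V. E v u}"

definition rich_sets :: "'a set \<Rightarrow> ('a \<Rightarrow> 'a \<Rightarrow> bool) \<Rightarrow> nat \<Rightarrow> nat \<Rightarrow> 'a set set" where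
  "rich_sets V E r t = {X. X \<subseteq> V \<and> card X = r \<and> card (common_nbrs V E X) > t}"

definition degenerate :: "'a set \<Rightarrow> ('a \<Rightarrow> 'a \<Rightarrow> bool) \<Rightarrow> nat \<Rightarrow> bool" where
  "degenerate V E t \<longleftrightarrow> (\<forall>W\<subseteq>V. W \<noteq> {} \<longrightarrow> (\<exists>v\<in>W. card (nbrs W E v) \<le> t))"

lemma degenerate_subset: "degenerate V E t \<Longrightarrow> W \<subseteq> V \<Longrightarrow> degenerate W E t"
  unfolding degenerate_def by (meson order_trans)

lemma finite_nbrs: "finite V \<Longrightarrow> finite (nbrs V E v)"
  by (simp add: nbrs_def)

lemma path_ending_at:
  assumes sym: "\<And>x y. E x y \<Longrightarrow> E y x"
    and deg: "\<forall>u\<in>V. D \<le> card (nbrs V E u)" and v: "v \<in> V" and "k < D"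
  shows "\<exists>ps. length ps = Suc k \<and> distinct ps \<and> set ps \<subseteq> V \<and> successively E ps \<and> last ps = v"
  using \<open>k < D\<close>
proof (induction k)
  case 0
  show ?case using v by (intro exI[of _ "[v]"]) auto
next
  case (Suc k)
  then obtain ps where ps: "length ps = Suc k" "distinct ps" "set ps \<subseteq> V"
    "successively E ps" "last ps = v" by auto
  have "ps \<noteq> []" using ps(1) by auto
  then have "hd ps \<in> V" using ps(3) by auto
  then have "card (set ps) < card (nbrs V E (hd ps))"
    using deg Suc.prems ps(1,2) distinct_card[of ps] by fastforce
  then have "\<not> nbrs V E (hd ps) \<subseteq> set ps"
    using card_mono[OF finite_set, of "nbrs V E (hd ps)" ps] by linarith
  then obtain u where u: "u \<in> nbrs V E (hd ps)" "u \<notin> set ps" by auto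
  then have "u \<in> V" "E u (hd ps)" using sym by (auto simp: nbrs_def)
  then show ?case
    using ps u \<open>ps \<noteq> []\<close> by (intro exI[of _ "u # ps"]) (simp add: successively_Cons)
qed

lemma contains_broom_mono:
  assumes "contains_broom W E l s" and "W \<subseteq> V"
  shows "contains_broom V E l s"
proof -
  obtain f where "inj_on f {0..<l+s}" "f ` {0..<l+s} \<subseteq> W"
    "\<forall>i<l+s. \<forall>j<l+s. broom_edge l s i j \<longrightarrow> E (f i) (f j)"
    using assms(1) unfolding contains_broom_def by blast
  then show ?thesis using assms(2) unfolding contains_broom_def by (intro exI[of _ f]) auto
qed

lemma contains_broomI:
  assumes sym: "\<And>x y. E x y \<Longrightarrow> E y x" and l: "2 \<le> l"
    and xs: "distinct xs" "set xs \<subseteq> V" "length xs = l + s"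
    and path: "successively E (take (l - 1) xs)"
    and leaves: "\<And>j. l - 1 \<le> j \<Longrightarrow> j < l + s \<Longrightarrow> E (xs ! (l - 2)) (xs ! j)"
  shows "contains_broom V E l s"
  unfolding contains_broom_def
proof (intro exI[of _ "nth xs"] conjI allI impI)
  show "inj_on (nth xs) {0..<l + s}" using xs by (intro inj_on_nth) auto
  show "nth xs ` {0..<l + s} \<subseteq> V" using xs nth_mem by fastforce
next
  fix i j assume "i < l + s" "j < l + s" "broom_edge l s i j"
  have edge: "E (xs ! i) (xs ! j)" if "i + 1 = j" "j < l" for i j
  proof (cases "j < l - 1")
    case True
    then show ?thesis
      using successively_nth[OF path, of i] that xs(3) by auto
  next
    case False
    then have "i = l - 2" "l - 1 \<le> j" using that by auto
    then show ?thesis using leaves[of j] that by simp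
  qed
  from \<open>broom_edge l s i j\<close> consider "i + 1 = j" "j < l" | "j + 1 = i" "i < l"
    | "i = l - 2" "l \<le> j" "j < l + s" | "j = l - 2" "l \<le> i" "i < l + s"
    unfolding broom_edge_def by blast
  then show "E (xs ! i) (xs ! j)"
  proof cases
    case 3
    then show ?thesis using leaves[of j] by simp
  next
    case 4
    then show ?thesis using leaves[of i] sym by simp
  qed (use edge sym in blast)+
qed

lemma contains_broom_if_min_degree:
  assumes sym: "\<And>x y. E x y \<Longrightarrow> E y x" and "V \<noteq> {}" and l: "2 \<le> l"
    and deg: "\<forall>u\<in>V. l + s \<le> card (nbrs V E u)"
  shows "contains_broom V E l s"
proof -
  obtain v where v: "v \<in> V" using \<open>V \<noteq> {}\<close> by auto
  have "l - 2 < l + s" using l by simp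
  then obtain ps where ps: "length ps = Suc (l - 2)" "distinct ps" "set ps \<subseteq> V"
    "successively E ps" "last ps = v"
    using path_ending_at[OF sym deg v] by blast
  have len_ps: "length ps = l - 1" using ps(1) l by simp
  define S where "S = nbrs V E v - set ps"
  have "s + 1 \<le> card S"
    using deg v diff_card_le_card_Diff[of "set ps" "nbrs V E v"] distinct_card[OF ps(2)] len_ps l
    unfolding S_def by auto
  then obtain T where T: "T \<subseteq> S" "card T = s + 1"
    by (meson obtain_subset_with_card_n)
  then have "finite T" using card.infinite by force
  then obtain ls where ls: "set ls = T" "distinct ls" "length ls = s + 1"
    using T(2) by (metis finite_distinct_list distinct_card)
  have "l - 2 < length ps" "l - 2 = length ps - 1" using len_ps l by auto
  then have "(ps @ ls) ! (l - 2) = ps ! (length ps - 1)" by (simp add: nth_append)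
  also have "\<dots> = v" using ps(1,5) by (metis last_conv_nth list.size(3) nat.distinct(1))
  finally have penultimate: "(ps @ ls) ! (l - 2) = v" .
  show ?thesis
  proof (rule contains_broomI[OF sym l])
    show "distinct (ps @ ls)" using ps ls T by (auto simp: S_def)
    show "set (ps @ ls) \<subseteq> V" using ps ls T by (auto simp: S_def nbrs_def)
    show "length (ps @ ls) = l + s" using len_ps ls l by simp
    show "successively E (take (l - 1) (ps @ ls))" using ps(4) len_ps by simp
  next
    fix j assume "l - 1 \<le> j" "j < l + s"
    then have "(ps @ ls) ! j \<in> T" using len_ps ls l by (auto simp: nth_append)
    then show "E ((ps @ ls) ! (l - 2)) ((ps @ ls) ! j)"
      using penultimate T by (auto simp: S_def nbrs_def)
  qed
qed

lemma broom_free_low_degree_vertex: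
  assumes "\<And>x y. E x y \<Longrightarrow> E y x" and "V \<noteq> {}" and "2 \<le> l" and "broom_free V E l s"
  shows "\<exists>v\<in>V. card (nbrs V E v) < l + s"
  using contains_broom_if_min_degree[of E V l s] assms
  unfolding broom_free_def by (meson not_le)

lemma broom_free_degenerate:
  assumes sym: "\<And>x y. E x y \<Longrightarrow> E y x" and "2 \<le> l" and "broom_free V E l s"
  shows "degenerate V E (l + s)"
  unfolding degenerate_def
proof (intro allI impI)
  fix W assume "W \<subseteq> V" "W \<noteq> {}"
  have "broom_free W E l s"
    using assms(3) contains_broom_mono[OF _ \<open>W \<subseteq> V\<close>] unfolding broom_free_def by blast
  then obtain v where "v \<in> W" "card (nbrs W E v) < l + s"
    using broom_free_low_degree_vertex[of E W l s, OF sym \<open>W \<noteq> {}\<close> \<open>2 \<le> l\<close>] by blast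
  then show "\<exists>v\<in>W. card (nbrs W E v) \<le> l + s" using less_imp_le by blast
qed

lemma rich_sets_remove_low_degree:
  assumes "finite V" and sym: "\<And>x y. E x y \<Longrightarrow> E y x" and deg: "card (nbrs V E v) \<le> t"
  shows "rich_sets V E r t \<subseteq> rich_sets (V - {v}) E r t \<union> {X. X \<subseteq> nbrs V E v \<and> card X = r}"
proof
  fix X assume X: "X \<in> rich_sets V E r t"
  show "X \<in> rich_sets (V - {v}) E r t \<union> {X. X \<subseteq> nbrs V E v \<and> card X = r}"
  proof (cases "v \<in> common_nbrs V E X")
    case True
    then have "X \<subseteq> nbrs V E v" using X sym by (auto simp: rich_sets_def common_nbrs_def nbrs_def)
    then show ?thesis using X by (auto simp: rich_sets_def)
  next
    case False
    have "v \<notin> X"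
    proof
      assume "v \<in> X"
      then have "common_nbrs V E X \<subseteq> nbrs V E v" by (auto simp: common_nbrs_def nbrs_def)
      then have "card (common_nbrs V E X) \<le> card (nbrs V E v)"
        by (rule card_mono[OF finite_nbrs[OF \<open>finite V\<close>]])
      then show False using X deg by (simp add: rich_sets_def)
    qed
    moreover have "common_nbrs (V - {v}) E X = common_nbrs V E X"
      using False by (auto simp: common_nbrs_def)
    ultimately show ?thesis using X by (auto simp: rich_sets_def)
  qed
qed

lemma card_rich_sets_le:
  assumes "finite V" and sym: "\<And>x y. E x y \<Longrightarrow> E y x"
    and "degenerate V E t"
  shows "card (rich_sets V E r t) \<le> 2 ^ t * card V"
  using assms(1,3)
proof (induction V rule: finite_psubset_induct)
  case (psubset V)
  show ?case
  proof (cases "V = {}")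
    case True
    then show ?thesis by (simp add: rich_sets_def common_nbrs_def)
  next
    case False
    then obtain v where v: "v \<in> V" "card (nbrs V E v) \<le> t"
      using psubset.prems unfolding degenerate_def by blast
    let ?N = "{X. X \<subseteq> nbrs V E v \<and> card X = r}"
    have fin_N: "finite ?N"
      by (rule finite_subset[of _ "Pow (nbrs V E v)"]) (auto simp: finite_nbrs psubset.hyps)
    have "card ?N \<le> card (Pow (nbrs V E v))"
      by (rule card_mono) (auto simp: finite_nbrs psubset.hyps)
    also have "\<dots> \<le> 2 ^ t"
      using v(2) psubset.hyps by (simp add: card_Pow finite_nbrs power_increasing)
    finally have card_N: "card ?N \<le> 2 ^ t" .
    have fin_rich: "finite (rich_sets (V - {v}) E r t)"
      by (rule finite_subset[of _ "Pow V"]) (auto simp: rich_sets_def psubset.hyps)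
    have IH: "card (rich_sets (V - {v}) E r t) \<le> 2 ^ t * card (V - {v})"
      using psubset.IH[OF _ degenerate_subset[OF psubset.prems]] v(1) by blast
    have "card (rich_sets V E r t) \<le> card (rich_sets (V - {v}) E r t \<union> ?N)"
      using rich_sets_remove_low_degree[OF psubset.hyps(1) sym v(2)] fin_rich fin_N
      by (intro card_mono) auto
    also have "\<dots> \<le> card (rich_sets (V - {v}) E r t) + card ?N" by (rule card_Un_le)
    also have "\<dots> \<le> 2 ^ t * card (V - {v}) + 2 ^ t" using IH card_N by linarith
    also have "\<dots> = 2 ^ t * card V"
      by (simp flip: card_Suc_Diff1[OF psubset.hyps(1) v(1)])
    finally show ?thesis .
  qed
qed

theorem mainTheorem4:
  fixes l s r :: nat
  assumes "l \<ge> 4" and "r \<ge> 2"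
  shows "\<exists>c::real. \<forall>(V::nat set) E.
           simple_graph V E \<and> broom_free V E l s \<longrightarrow>
           real (card {X. X \<subseteq> V \<and> card X = r \<and> card (common_nbrs V E X) > l + s})
             \<le> c * real (card V)"
proof (intro exI[of _ "2 ^ (l + s)"] allI impI)
  fix V :: "nat set" and E assume "simple_graph V E \<and> broom_free V E l s"
  then have fin: "finite V" and sym: "\<And>x y. E x y \<Longrightarrow> E y x" and free: "broom_free V E l s"
    by (auto simp: simple_graph_def)
  have "degenerate V E (l + s)"
    using broom_free_degenerate[of E l V s, OF sym _ free] \<open>l \<ge> 4\<close> by simp
  then have "card (rich_sets V E r (l + s)) \<le> 2 ^ (l + s) * card V"
    using card_rich_sets_le[of V E] fin sym by blast
  then have "real (card (rich_sets V E r (l + s))) \<le> real (2 ^ (l + s) * card V)"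
    by (simp only: of_nat_le_iff)
  then show "real (card {X. X \<subseteq> V \<and> card X = r \<and> card (common_nbrs V E X) > l + s})
      \<le> 2 ^ (l + s) * real (card V)"
    by (simp add: rich_sets_def)
qed

end
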